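(* Let $G$ be a finite group. Then the width of $G$ is equal to the number of conjugacy classes of meet-irreducible subgroups of $G$. Moreover, choosing one representative $I$ from each conjugacy class of meet-irreducible subgroups of $G$, the set of arrows $\{(I,G)\}$ so obtained is a minimal generating set for the complete transfer system of $G$.
   Context: For a finite group $G$, an arrow is a pair $(H,K)$ of subgroups with $H\leqslant K$; it is an identity arrow if $H=K$. A $G$-transfer system is a set $\mathsf{T}$ of arrows containing all identity arrows and closed under composition ($(H,K),(K,L)\in\mathsf{T}\Rightarrow(H,L)\in\mathsf{T}$), conjugation ($(H,K)\in\mathsf{T}\Rightarrow(gHg^{-1},gKg^{-1})\in\mathsf{T}$) and restriction ($(H,K)\in\mathsf{T}$, $L\leqslant K\Rightarrow(H\cap L,L)\in\mathsf{T}$). For a set $S$ of non-identity arrows, $\langle S\rangle$ is the smallest transfer system containing $S$. A minimal generating set of a transfer system $\mathsf{T}$ is a set $S\subseteq\mathsf{T}$ of non-identity arrows with $\langle S\rangle=\mathsf{T}$ and $\langle S\setminus\{s\}\rangle\neq\mathsf{T}$ for all $s\in S$; all minimal generating sets of $\mathsf{T}$ have the same cardinality, denoted $\mathfrak{m}(\mathsf{T})$. The complete transfer system of $G$ consists of all arrows, and the width of $G$ is $\mathfrak{m}$ of the complete transfer system. A subgroup $H\leqslant G$ is meet-irreducible if it is meet-irreducible in the subgroup lattice: $H\neq G$, and whenever $H=A\cap B$ for subgroups $A,B$, one has $H=A$ or $H=B$. *)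

theory Defs
  imports "HOL-Algebra.Group"
begin

type_synonym 'a arrow = "'a set \<times> 'a set"

definition conjugate :: "('a, 'b) monoid_scheme \<Rightarrow> 'a \<Rightarrow> 'a set \<Rightarrow> 'a set" where
  "conjugate G g H = {g \<otimes>\<^bsub>G\<^esub> h \<otimes>\<^bsub>G\<^esub> inv\<^bsub>G\<^esub> g | h. h \<in> H}"

definition arrows :: "('a, 'b) monoid_scheme \<Rightarrow> 'a arrow set" where
  "arrows G = {(H, K). subgroup H G \<and> subgroup K G \<and> H \<subseteq> K}"

definition transfer_system :: "('a, 'b) monoid_scheme \<Rightarrow> 'a arrow set \<Rightarrow> bool" where
  "transfer_system G T \<longleftrightarrow>
     T \<subseteq> arrows G \<and>
     (\<forall>H. subgroup H G \<longrightarrow> (H, H) \<in> T) \<and>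
     (\<forall>H K L. (H, K) \<in> T \<longrightarrow> (K, L) \<in> T \<longrightarrow> (H, L) \<in> T) \<and>
     (\<forall>H K g. (H, K) \<in> T \<longrightarrow> g \<in> carrier G \<longrightarrow> (conjugate G g H, conjugate G g K) \<in> T) \<and>
     (\<forall>H K L. (H, K) \<in> T \<longrightarrow> subgroup L G \<longrightarrow> L \<subseteq> K \<longrightarrow> (H \<inter> L, L) \<in> T)"

definition generated_ts :: "('a, 'b) monoid_scheme \<Rightarrow> 'a arrow set \<Rightarrow> 'a arrow set" where
  "generated_ts G S = \<Inter> {T. transfer_system G T \<and> S \<subseteq> T}"

definition complete_ts :: "('a, 'b) monoid_scheme \<Rightarrow> 'a arrow set" where
  "complete_ts G = arrows G"

definition minimal_generating_set :: "('a, 'b) monoid_scheme \<Rightarrow> 'a arrow set \<Rightarrow> 'a arrow set \<Rightarrow> bool" where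
  "minimal_generating_set G T S \<longleftrightarrow>
     S \<subseteq> T \<and> (\<forall>s \<in> S. fst s \<noteq> snd s) \<and>
     generated_ts G S = T \<and>
     (\<forall>s \<in> S. generated_ts G (S - {s}) \<noteq> T)"

text \<open>The common cardinality of minimal generating sets (well defined by a result of the paper).\<close>
definition mgen_card :: "('a, 'b) monoid_scheme \<Rightarrow> 'a arrow set \<Rightarrow> nat" where
  "mgen_card G T = card (SOME S. minimal_generating_set G T S)"

definition width :: "('a, 'b) monoid_scheme \<Rightarrow> nat" where
  "width G = mgen_card G (complete_ts G)"

definition meet_irreducible :: "('a, 'b) monoid_scheme \<Rightarrow> 'a set \<Rightarrow> bool" where
  "meet_irreducible G H \<longleftrightarrow>
     subgroup H G \<and> H \<noteq> carrier G \<and>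
     (\<forall>A B. subgroup A G \<longrightarrow> subgroup B G \<longrightarrow> H = A \<inter> B \<longrightarrow> H = A \<or> H = B)"

definition conj_class :: "('a, 'b) monoid_scheme \<Rightarrow> 'a set \<Rightarrow> 'a set set" where
  "conj_class G H = {conjugate G g H | g. g \<in> carrier G}"

end

theory Submission
  imports Defs "HOL-Algebra.Group_Action"
begin

text \<open>
  For a meet-irreducible subgroup \<open>I\<close>, removing all non-identity arrows out of conjugates of \<open>I\<close>
  leaves a transfer system. The only point is restriction: if \<open>(H \<inter> L, L)\<close> is restricted from an
  admissible \<open>(H, K)\<close> and \<open>H \<inter> L\<close> is conjugate to \<open>I\<close>, then \<open>H \<inter> L\<close> is meet-irreducible, so it
  equals \<open>L\<close> or \<open>H\<close>, and in the latter case \<open>H = K \<supseteq> L\<close>. Hence every generating set of the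
  complete transfer system contains a non-identity arrow out of some conjugate of every
  meet-irreducible subgroup.

  Conversely, a transfer system \<open>T\<close> with this property contains every arrow \<open>(H, K)\<close>, by downward
  induction on \<open>H\<close>. If \<open>H\<close> is not meet-irreducible, it is \<open>A \<inter> B\<close> with \<open>A, B\<close> strictly larger,
  and \<open>(H, K)\<close> is obtained by restricting \<open>(A, G)\<close> to \<open>K\<close>, then \<open>(B, G)\<close> to \<open>A \<inter> K\<close>, and
  composing. If \<open>H\<close> is meet-irreducible, \<open>T\<close> contains some \<open>(H, K\<^sub>0)\<close> with \<open>H \<subset> K\<^sub>0\<close>; restricting
  it to \<open>K\<^sub>0 \<inter> K\<close>, which still strictly contains \<open>H\<close>, and composing with \<open>(K\<^sub>0 \<inter> K, K)\<close> gives
  \<open>(H, K)\<close>.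

  So a set of non-identity arrows generates everything iff the conjugacy classes of the sources
  of its arrows cover all classes of meet-irreducible subgroups, and it is minimal iff each class
  is hit by exactly one arrow.
\<close>

lemma transfer_system_subset_arrows: "transfer_system G T \<Longrightarrow> T \<subseteq> arrows G"
  and transfer_system_id: "transfer_system G T \<Longrightarrow> subgroup H G \<Longrightarrow> (H, H) \<in> T"
  and transfer_system_trans:
    "transfer_system G T \<Longrightarrow> (H, K) \<in> T \<Longrightarrow> (K, L) \<in> T \<Longrightarrow> (H, L) \<in> T"
  and transfer_system_conjugate:
    "transfer_system G T \<Longrightarrow> (H, K) \<in> T \<Longrightarrow> g \<in> carrier G
      \<Longrightarrow> (conjugate G g H, conjugate G g K) \<in> T"
  and transfer_system_restrict:
    "transfer_system G T \<Longrightarrow> (H, K) \<in> T \<Longrightarrow> subgroup L G \<Longrightarrow> L \<subseteq> K \<Longrightarrow> (H \<inter> L, L) \<in> T"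
  unfolding transfer_system_def by blast+

lemma arrowsD:
  assumes "(H, K) \<in> arrows G"
  shows "subgroup H G" "subgroup K G" "H \<subseteq> K"
  using assms unfolding arrows_def by auto

lemma transfer_system_Inter:
  assumes "F \<noteq> {}" and ts: "\<And>T. T \<in> F \<Longrightarrow> transfer_system G T"
  shows "transfer_system G (\<Inter>F)"
  unfolding transfer_system_def
proof (intro conjI allI impI)
  show "\<Inter>F \<subseteq> arrows G"
    using assms transfer_system_subset_arrows by blast
next
  fix H assume "subgroup H G"
  then show "(H, H) \<in> \<Inter>F" using transfer_system_id[OF ts] by blast
next
  fix H K L assume "(H, K) \<in> \<Inter>F" "(K, L) \<in> \<Inter>F"
  then show "(H, L) \<in> \<Inter>F" using transfer_system_trans[OF ts] by blast
next
  fix H K g assume "(H, K) \<in> \<Inter>F" "g \<in> carrier G"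
  then show "(conjugate G g H, conjugate G g K) \<in> \<Inter>F"
    using transfer_system_conjugate[OF ts] by blast
next
  fix H K L assume "(H, K) \<in> \<Inter>F" "subgroup L G" "L \<subseteq> K"
  then show "(H \<inter> L, L) \<in> \<Inter>F" using transfer_system_restrict[OF ts] by blast
qed

lemma subset_generated_ts: "S \<subseteq> generated_ts G S"
  unfolding generated_ts_def by auto

lemma generated_ts_least: "transfer_system G T \<Longrightarrow> S \<subseteq> T \<Longrightarrow> generated_ts G S \<subseteq> T"
  unfolding generated_ts_def by auto

lemma minimal_generating_setD:
  assumes "minimal_generating_set G T S"
  shows "S \<subseteq> T" "\<And>s. s \<in> S \<Longrightarrow> fst s \<noteq> snd s" "generated_ts G S = T"
    "\<And>s. s \<in> S \<Longrightarrow> generated_ts G (S - {s}) \<noteq> T"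
  using assms unfolding minimal_generating_set_def by auto

definition arrows_avoiding :: "('a, 'b) monoid_scheme \<Rightarrow> 'a set \<Rightarrow> 'a arrow set" where
  "arrows_avoiding G I = {(H, K) \<in> arrows G. H \<in> conj_class G I \<longrightarrow> H = K}"

lemma mem_arrows_avoiding:
  "(H, K) \<in> arrows_avoiding G I \<longleftrightarrow> (H, K) \<in> arrows G \<and> (H \<in> conj_class G I \<longrightarrow> H = K)"
  by (simp add: arrows_avoiding_def)

context group
begin

lemma conjugate_eq_image: "conjugate G g H = (\<lambda>h. g \<otimes> h \<otimes> inv g) ` H"
  by (auto simp: conjugate_def)

lemma conjugate_eq_coset: "conjugate G g H = g <# H #> inv g"
  by (auto simp: conjugate_def l_coset_def r_coset_def)

lemma subgroup_conjugate: "subgroup H G \<Longrightarrow> g \<in> carrier G \<Longrightarrow> subgroup (conjugate G g H) G"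
  by (simp add: conjugate_eq_coset subgroup_conjugation_is_surj2)

lemma conjugate_mono: "A \<subseteq> B \<Longrightarrow> conjugate G g A \<subseteq> conjugate G g B"
  by (auto simp: conjugate_eq_image)

lemma conjugate_one: "H \<subseteq> carrier G \<Longrightarrow> conjugate G \<one> H = H"
  by (auto simp: conjugate_eq_image image_iff subsetD)

lemma conjugate_conjugate:
  assumes "g \<in> carrier G" "h \<in> carrier G" "H \<subseteq> carrier G"
  shows "conjugate G g (conjugate G h H) = conjugate G (g \<otimes> h) H"
  unfolding conjugate_eq_image image_image
proof (rule image_cong[OF refl])
  fix x assume "x \<in> H"
  with assms have "x \<in> carrier G" by auto
  with assms show "g \<otimes> (h \<otimes> x \<otimes> inv h) \<otimes> inv g = g \<otimes> h \<otimes> x \<otimes> inv (g \<otimes> h)"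
    by (simp add: inv_mult_group m_assoc)
qed

lemma conjugate_inv_conjugate:
  "g \<in> carrier G \<Longrightarrow> H \<subseteq> carrier G \<Longrightarrow> conjugate G (inv g) (conjugate G g H) = H"
  by (simp add: conjugate_conjugate conjugate_one)

lemma conjugate_conjugate_inv:
  "g \<in> carrier G \<Longrightarrow> H \<subseteq> carrier G \<Longrightarrow> conjugate G g (conjugate G (inv g) H) = H"
  by (simp add: conjugate_conjugate conjugate_one)

lemma conjugate_subset_carrier: "g \<in> carrier G \<Longrightarrow> H \<subseteq> carrier G \<Longrightarrow> conjugate G g H \<subseteq> carrier G"
  by (auto simp: conjugate_eq_image)

lemma conjugate_carrier:
  assumes g: "g \<in> carrier G"
  shows "conjugate G g (carrier G) = carrier G"
proof
  show "conjugate G g (carrier G) \<subseteq> carrier G"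
    by (rule conjugate_subset_carrier[OF g subset_refl])
  have "conjugate G g (conjugate G (inv g) (carrier G)) \<subseteq> conjugate G g (carrier G)"
    by (rule conjugate_mono[OF conjugate_subset_carrier[OF inv_closed[OF g] subset_refl]])
  then show "carrier G \<subseteq> conjugate G g (carrier G)"
    using conjugate_conjugate_inv[OF g] by simp
qed

lemma conjugate_Int:
  assumes "g \<in> carrier G" "A \<subseteq> carrier G" "B \<subseteq> carrier G"
  shows "conjugate G g (A \<inter> B) = conjugate G g A \<inter> conjugate G g B"
  unfolding conjugate_eq_image
  by (rule inj_on_image_Int[OF _ assms(2,3)]) (use assms(1) in \<open>auto simp: inj_on_def\<close>)

lemma conjugate_in_conj_class: "g \<in> carrier G \<Longrightarrow> conjugate G g H \<in> conj_class G H"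
  unfolding conj_class_def by blast

lemma conj_class_refl: "H \<subseteq> carrier G \<Longrightarrow> H \<in> conj_class G H"
  using conjugate_in_conj_class[OF one_closed, of H] by (simp add: conjugate_one)

lemma conj_class_conjugate:
  assumes g: "g \<in> carrier G" and H: "H \<subseteq> carrier G"
  shows "conj_class G (conjugate G g H) = conj_class G H"
proof (intro equalityI subsetI)
  fix J assume "J \<in> conj_class G (conjugate G g H)"
  then obtain k where "k \<in> carrier G" "J = conjugate G (k \<otimes> g) H"
    unfolding conj_class_def using conjugate_conjugate[OF _ g H] by auto
  then show "J \<in> conj_class G H"
    using g conjugate_in_conj_class[of "k \<otimes> g" H] by simp
next
  fix J assume "J \<in> conj_class G H"
  then obtain k where k: "k \<in> carrier G" "J = conjugate G k H"
    unfolding conj_class_def by auto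
  then have "J = conjugate G (k \<otimes> inv g) (conjugate G g H)"
    using g H by (simp add: conjugate_conjugate m_assoc)
  then show "J \<in> conj_class G (conjugate G g H)"
    using g k(1) conjugate_in_conj_class[of "k \<otimes> inv g" "conjugate G g H"] by simp
qed

lemma conj_class_eq:
  assumes "J \<in> conj_class G I" "I \<subseteq> carrier G"
  shows "conj_class G J = conj_class G I"
proof -
  obtain g where "g \<in> carrier G" "J = conjugate G g I"
    using assms(1) unfolding conj_class_def by blast
  then show ?thesis using conj_class_conjugate assms(2) by simp
qed

lemma meet_irreducible_subgroup: "meet_irreducible G I \<Longrightarrow> subgroup I G"
  unfolding meet_irreducible_def by blast

lemma meet_irreducible_subset_carrier: "meet_irreducible G I \<Longrightarrow> I \<subseteq> carrier G"
  by (rule subgroup.subset[OF meet_irreducible_subgroup])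

lemma meet_irreducible_conjugate:
  assumes I: "meet_irreducible G I" and g: "g \<in> carrier G"
  shows "meet_irreducible G (conjugate G g I)"
  unfolding meet_irreducible_def
proof (intro conjI allI impI)
  have Ic: "I \<subseteq> carrier G" using meet_irreducible_subset_carrier[OF I] .
  show "subgroup (conjugate G g I) G"
    using subgroup_conjugate[OF meet_irreducible_subgroup[OF I] g] .
  show "conjugate G g I \<noteq> carrier G"
  proof
    assume "conjugate G g I = carrier G"
    then have "I = conjugate G (inv g) (carrier G)"
      using conjugate_inv_conjugate[OF g Ic] by simp
    then show False
      using I conjugate_carrier[OF inv_closed[OF g]] unfolding meet_irreducible_def by simp
  qed
  fix A B assume A: "subgroup A G" and B: "subgroup B G" and eq: "conjugate G g I = A \<inter> B"
  have Ac: "A \<subseteq> carrier G" and Bc: "B \<subseteq> carrier G"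
    using A B subgroup.subset by blast+
  have "I = conjugate G (inv g) (A \<inter> B)"
    using eq conjugate_inv_conjugate[OF g Ic] by simp
  also have "\<dots> = conjugate G (inv g) A \<inter> conjugate G (inv g) B"
    using conjugate_Int[OF inv_closed[OF g] Ac Bc] .
  finally have "I = conjugate G (inv g) A \<inter> conjugate G (inv g) B" .
  then have "I = conjugate G (inv g) A \<or> I = conjugate G (inv g) B"
    using I subgroup_conjugate[OF A inv_closed[OF g]] subgroup_conjugate[OF B inv_closed[OF g]]
    unfolding meet_irreducible_def by blast
  then show "conjugate G g I = A \<or> conjugate G g I = B"
    using conjugate_conjugate_inv[OF g Ac] conjugate_conjugate_inv[OF g Bc] by auto
qed

lemma meet_irreducible_conj_class:
  "J \<in> conj_class G I \<Longrightarrow> meet_irreducible G I \<Longrightarrow> meet_irreducible G J"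
  unfolding conj_class_def by (auto intro: meet_irreducible_conjugate)

lemma transfer_system_arrows: "transfer_system G (arrows G)"
  unfolding transfer_system_def arrows_def
  by (auto simp: subgroup_conjugate conjugate_mono subgroups_Inter_pair)

lemma transfer_system_generated_ts: "S \<subseteq> arrows G \<Longrightarrow> transfer_system G (generated_ts G S)"
  unfolding generated_ts_def by (rule transfer_system_Inter) (use transfer_system_arrows in auto)

lemma transfer_system_arrows_avoiding:
  assumes I: "meet_irreducible G I"
  shows "transfer_system G (arrows_avoiding G I)"
  unfolding transfer_system_def
proof (intro conjI allI impI)
  have Ic: "I \<subseteq> carrier G" using meet_irreducible_subset_carrier[OF I] .
  fix H K g assume HK: "(H, K) \<in> arrows_avoiding G I" and g: "g \<in> carrier G"
  then have arrow: "(H, K) \<in> arrows G" and avoid: "H \<in> conj_class G I \<Longrightarrow> H = K"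
    by (simp_all add: mem_arrows_avoiding)
  have Hc: "H \<subseteq> carrier G" by (rule subgroup.subset[OF arrowsD(1)[OF arrow]])
  have "H = K" if "conjugate G g H \<in> conj_class G I"
  proof -
    have "conj_class G H = conj_class G I"
      using conj_class_eq[OF that Ic] conj_class_conjugate[OF g Hc] by simp
    then show "H = K" using avoid conj_class_refl[OF Hc] by simp
  qed
  moreover have "(conjugate G g H, conjugate G g K) \<in> arrows G"
    by (rule transfer_system_conjugate[OF transfer_system_arrows arrow g])
  ultimately show "(conjugate G g H, conjugate G g K) \<in> arrows_avoiding G I"
    by (auto simp: mem_arrows_avoiding)
next
  fix H K L assume HK: "(H, K) \<in> arrows_avoiding G I" and L: "subgroup L G" "L \<subseteq> K"
  then have arrow: "(H, K) \<in> arrows G" and avoid: "H \<in> conj_class G I \<Longrightarrow> H = K"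
    by (simp_all add: mem_arrows_avoiding)
  have "H \<inter> L = L" if "H \<inter> L \<in> conj_class G I"
  proof -
    have "H \<inter> L = H \<or> H \<inter> L = L"
      using meet_irreducible_conj_class[OF that I] arrowsD(1)[OF arrow] L(1)
      unfolding meet_irreducible_def by blast
    then show ?thesis using avoid that L(2) by auto
  qed
  moreover have "(H \<inter> L, L) \<in> arrows G"
    by (rule transfer_system_restrict[OF transfer_system_arrows arrow L])
  ultimately show "(H \<inter> L, L) \<in> arrows_avoiding G I"
    by (auto simp: mem_arrows_avoiding)
qed (auto simp: arrows_avoiding_def arrows_def)

lemma subgroup_downward_induct [consumes 2, case_names step]:
  assumes fin: "finite (carrier G)" and "subgroup H G"
    and step: "\<And>H. subgroup H G \<Longrightarrow> (\<And>M. subgroup M G \<Longrightarrow> H \<subset> M \<Longrightarrow> P M) \<Longrightarrow> P H"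
  shows "P H"
  using assms(2)
proof (induction "card (carrier G) - card H" arbitrary: H rule: less_induct)
  case less
  show ?case
  proof (rule step[OF less.prems])
    fix M assume M: "subgroup M G" "H \<subset> M"
    have Mc: "M \<subseteq> carrier G" by (rule subgroup.subset[OF M(1)])
    have "card H < card M" by (rule psubset_card_mono[OF finite_subset[OF Mc fin] M(2)])
    moreover have "card M \<le> card (carrier G)" by (rule card_mono[OF fin Mc])
    ultimately have "card (carrier G) - card M < card (carrier G) - card H" by linarith
    then show "P M" by (rule less.hyps[OF _ M(1)])
  qed
qed

lemma transfer_system_Int_arrow:
  assumes T: "transfer_system G T"
    and "(A, carrier G) \<in> T" "(B, carrier G) \<in> T"
    and A: "subgroup A G" and K: "subgroup K G" and "A \<inter> B \<subseteq> K"
  shows "(A \<inter> B, K) \<in> T"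
proof -
  have AK: "(A \<inter> K, K) \<in> T"
    using transfer_system_restrict[OF T assms(2) K subgroup.subset[OF K]] .
  have "(B \<inter> (A \<inter> K), A \<inter> K) \<in> T"
    using transfer_system_restrict[OF T assms(3) subgroups_Inter_pair[OF A K]]
      subgroup.subset[OF K] by blast
  moreover have "B \<inter> (A \<inter> K) = A \<inter> B" using assms(6) by auto
  ultimately show ?thesis using transfer_system_trans[OF T _ AK] by simp
qed

lemma meet_irreducible_psubset_Int:
  "meet_irreducible G H \<Longrightarrow> subgroup A G \<Longrightarrow> subgroup B G \<Longrightarrow> H \<subset> A \<Longrightarrow> H \<subset> B \<Longrightarrow> H \<subset> A \<inter> B"
  unfolding meet_irreducible_def by blast

lemma not_meet_irreducible_Int:
  assumes "subgroup H G" "H \<noteq> carrier G" "\<not> meet_irreducible G H"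
  obtains A B where "subgroup A G" "subgroup B G" "H \<subset> A" "H \<subset> B" "H = A \<inter> B"
  using assms unfolding meet_irreducible_def by blast

lemma transfer_system_meet_irreducible_arrow:
  assumes T: "transfer_system G T" and H: "meet_irreducible G H"
    and K\<^sub>0: "(H, K\<^sub>0) \<in> T" "H \<noteq> K\<^sub>0" and K: "subgroup K G" "H \<subset> K"
    and above: "\<And>M. subgroup M G \<Longrightarrow> H \<subset> M \<Longrightarrow> M \<subseteq> K \<Longrightarrow> (M, K) \<in> T"
  shows "(H, K) \<in> T"
proof -
  have "(H, K\<^sub>0) \<in> arrows G" using transfer_system_subset_arrows[OF T] K\<^sub>0(1) by blast
  then have sK\<^sub>0: "subgroup K\<^sub>0 G" and HK\<^sub>0: "H \<subset> K\<^sub>0" using arrowsD[of H K\<^sub>0 G] K\<^sub>0(2) by auto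
  have HM: "H \<subset> K\<^sub>0 \<inter> K" by (rule meet_irreducible_psubset_Int[OF H sK\<^sub>0 K(1) HK\<^sub>0 K(2)])
  have sM: "subgroup (K\<^sub>0 \<inter> K) G" by (rule subgroups_Inter_pair[OF sK\<^sub>0 K(1)])
  have "(H \<inter> (K\<^sub>0 \<inter> K), K\<^sub>0 \<inter> K) \<in> T"
    by (rule transfer_system_restrict[OF T K\<^sub>0(1) sM Int_lower1])
  moreover have "H \<inter> (K\<^sub>0 \<inter> K) = H" using HM by blast
  ultimately have "(H, K\<^sub>0 \<inter> K) \<in> T" by simp
  moreover have "(K\<^sub>0 \<inter> K, K) \<in> T" by (rule above[OF sM HM Int_lower2])
  ultimately show ?thesis by (rule transfer_system_trans[OF T])
qed

lemma arrows_subset_transfer_system: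
  assumes fin: "finite (carrier G)" and T: "transfer_system G T"
    and leaves: "\<And>I. meet_irreducible G I \<Longrightarrow> \<exists>K. (I, K) \<in> T \<and> I \<noteq> K"
  shows "arrows G \<subseteq> T"
proof -
  have "(H, K) \<in> T" if H: "subgroup H G" and K: "subgroup K G" "H \<subseteq> K" for H K
    using fin H K
  proof (induction H arbitrary: K rule: subgroup_downward_induct)
    case (step H)
    have IH: "(M, K') \<in> T" if "subgroup M G" "H \<subset> M" "subgroup K' G" "M \<subseteq> K'" for M K'
      using step.IH that .
    show ?case
    proof (cases "H = K")
      case True
      then show ?thesis using transfer_system_id[OF T step.hyps] by simp
    next
      case False
      then have HK: "H \<subset> K" using step.prems(2) by blast
      show ?thesis
      proof (cases "meet_irreducible G H")
        case True
        then obtain K\<^sub>0 where "(H, K\<^sub>0) \<in> T" "H \<noteq> K\<^sub>0" using leaves by blast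
        then show ?thesis
          using transfer_system_meet_irreducible_arrow[OF T True _ _ step.prems(1) HK]
            IH[OF _ _ step.prems(1)] by blast
      next
        case False
        have "H \<noteq> carrier G" using subgroup.subset[OF step.prems(1)] HK by blast
        then obtain A B where AB: "subgroup A G" "subgroup B G" "H \<subset> A" "H \<subset> B" "H = A \<inter> B"
          using not_meet_irreducible_Int[OF step.hyps _ False] by blast
        have "(A, carrier G) \<in> T" by (rule IH[OF AB(1) AB(3) subgroup_self subgroup.subset[OF AB(1)]])
        moreover have "(B, carrier G) \<in> T"
          by (rule IH[OF AB(2) AB(4) subgroup_self subgroup.subset[OF AB(2)]])
        ultimately show ?thesis
          using transfer_system_Int_arrow[OF T _ _ AB(1) step.prems(1)] AB(5) step.prems(2) by simp
      qed
    qed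
  qed
  then show ?thesis unfolding arrows_def by auto
qed

lemma generated_ts_complete_has_arrow_from_class:
  assumes X: "X \<subseteq> arrows G" and eq: "generated_ts G X = complete_ts G"
    and I: "meet_irreducible G I"
  shows "\<exists>H K. (H, K) \<in> X \<and> H \<in> conj_class G I \<and> H \<noteq> K"
proof (rule ccontr)
  assume "\<not> (\<exists>H K. (H, K) \<in> X \<and> H \<in> conj_class G I \<and> H \<noteq> K)"
  then have "X \<subseteq> arrows_avoiding G I" using X unfolding arrows_avoiding_def by auto
  then have "generated_ts G X \<subseteq> arrows_avoiding G I"
    by (rule generated_ts_least[OF transfer_system_arrows_avoiding[OF I]])
  moreover have "(I, carrier G) \<in> arrows G"
    using meet_irreducible_subgroup[OF I] meet_irreducible_subset_carrier[OF I] subgroup_self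
    by (simp add: arrows_def)
  moreover have "(I, carrier G) \<notin> arrows_avoiding G I"
    using I conj_class_refl[OF meet_irreducible_subset_carrier[OF I]]
    unfolding mem_arrows_avoiding meet_irreducible_def by auto
  ultimately show False using eq unfolding complete_ts_def by auto
qed

lemma generated_ts_complete_if_arrows_from_classes:
  assumes fin: "finite (carrier G)" and X: "X \<subseteq> arrows G"
    and leaves: "\<And>I. meet_irreducible G I \<Longrightarrow> \<exists>H K. (H, K) \<in> X \<and> H \<in> conj_class G I \<and> H \<noteq> K"
  shows "generated_ts G X = complete_ts G"
proof -
  let ?T = "generated_ts G X"
  have T: "transfer_system G ?T" using transfer_system_generated_ts[OF X] .
  have "arrows G \<subseteq> ?T"
  proof (rule arrows_subset_transfer_system[OF fin T])
    fix J assume J: "meet_irreducible G J"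
    then obtain H K g where HK: "(H, K) \<in> X" "H \<noteq> K" and g: "g \<in> carrier G" "H = conjugate G g J"
      using leaves unfolding conj_class_def by blast
    have Jc: "J \<subseteq> carrier G" using meet_irreducible_subset_carrier[OF J] .
    have "(H, K) \<in> arrows G" using HK(1) X by blast
    then have Kc: "K \<subseteq> carrier G" by (rule subgroup.subset[OF arrowsD(2)])
    have "(conjugate G (inv g) H, conjugate G (inv g) K) \<in> ?T"
      by (rule transfer_system_conjugate[OF T subsetD[OF subset_generated_ts HK(1)] inv_closed[OF g(1)]])
    moreover have "conjugate G (inv g) H = J" using g conjugate_inv_conjugate Jc by simp
    moreover have "J \<noteq> conjugate G (inv g) K"
      using g HK(2) conjugate_conjugate_inv[OF g(1) Kc] by auto
    ultimately show "\<exists>K. (J, K) \<in> ?T \<and> J \<noteq> K" by auto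
  qed
  then show ?thesis
    using transfer_system_subset_arrows[OF T] unfolding complete_ts_def by auto
qed

lemma generated_ts_eq_complete_iff:
  assumes fin: "finite (carrier G)" and X: "X \<subseteq> arrows G"
  shows "generated_ts G X = complete_ts G \<longleftrightarrow>
    (\<forall>I. meet_irreducible G I \<longrightarrow> (\<exists>H K. (H, K) \<in> X \<and> H \<in> conj_class G I \<and> H \<noteq> K))"
  using generated_ts_complete_has_arrow_from_class[OF X]
    generated_ts_complete_if_arrows_from_classes[OF fin X] by blast

lemma minimal_generating_set_representatives:
  assumes fin: "finite (carrier G)" and R: "R \<subseteq> {H. meet_irreducible G H}"
    and rep: "\<forall>H. meet_irreducible G H \<longrightarrow> (\<exists>!I. I \<in> R \<and> I \<in> conj_class G H)"
  shows "minimal_generating_set G (complete_ts G) ((\<lambda>I. (I, carrier G)) ` R)"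
proof -
  let ?S = "(\<lambda>I. (I, carrier G)) ` R"
  have mi: "meet_irreducible G I" if "I \<in> R" for I using R that by blast
  have S: "?S \<subseteq> arrows G"
  proof
    fix s assume "s \<in> ?S"
    then obtain I where I: "I \<in> R" "s = (I, carrier G)" by blast
    then show "s \<in> arrows G"
      using meet_irreducible_subgroup[OF mi] meet_irreducible_subset_carrier[OF mi] subgroup_self
      by (simp add: arrows_def)
  qed
  have non_id: "fst s \<noteq> snd s" if "s \<in> ?S" for s
    using that mi unfolding meet_irreducible_def by auto
  have generates: "generated_ts G ?S = complete_ts G"
  proof (rule generated_ts_complete_if_arrows_from_classes[OF fin S])
    fix I assume "meet_irreducible G I"
    then obtain J where J: "J \<in> R" "J \<in> conj_class G I" using rep by blast
    moreover have "J \<noteq> carrier G" using mi[OF J(1)] by (simp add: meet_irreducible_def)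
    ultimately show "\<exists>H K. (H, K) \<in> ?S \<and> H \<in> conj_class G I \<and> H \<noteq> K" by blast
  qed
  have minimal: "generated_ts G (?S - {s}) \<noteq> complete_ts G" if s: "s \<in> ?S" for s
  proof
    assume eq: "generated_ts G (?S - {s}) = complete_ts G"
    obtain I where I: "I \<in> R" "s = (I, carrier G)" using s by blast
    have "?S - {s} \<subseteq> arrows G" using S by blast
    then obtain J K where "(J, K) \<in> ?S - {s}" "J \<in> conj_class G I"
      using generated_ts_complete_has_arrow_from_class[OF _ eq mi[OF I(1)]] by blast
    then have J: "J \<in> R" "J \<in> conj_class G I" "J \<noteq> I" using I(2) by auto
    have "I \<in> conj_class G I" by (rule conj_class_refl[OF meet_irreducible_subset_carrier[OF mi[OF I(1)]]])
    then show False using rep mi[OF I(1)] I(1) J by blast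
  qed
  show ?thesis unfolding minimal_generating_set_def
    using S non_id generates minimal by (auto simp: complete_ts_def)
qed

lemma minimal_generating_set_arrow_class:
  assumes fin: "finite (carrier G)" and S: "minimal_generating_set G (complete_ts G) S"
    and s: "s \<in> S"
  obtains I where "meet_irreducible G I" "fst s \<in> conj_class G I"
    "\<And>s'. s' \<in> S \<Longrightarrow> fst s' \<in> conj_class G I \<Longrightarrow> s' = s"
proof -
  have S_arrows: "S \<subseteq> arrows G"
    using minimal_generating_setD(1)[OF S] by (simp add: complete_ts_def)
  then have "S - {s} \<subseteq> arrows G" by blast
  then have "\<not> (\<forall>I. meet_irreducible G I \<longrightarrow>
      (\<exists>H K. (H, K) \<in> S - {s} \<and> H \<in> conj_class G I \<and> H \<noteq> K))"
    using minimal_generating_setD(4)[OF S s] generated_ts_eq_complete_iff[OF fin] by simp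
  then obtain I where I: "meet_irreducible G I"
    and none: "\<not> (\<exists>H K. (H, K) \<in> S - {s} \<and> H \<in> conj_class G I \<and> H \<noteq> K)"
    by blast
  obtain H K where HK: "(H, K) \<in> S" "H \<in> conj_class G I" "H \<noteq> K"
    using generated_ts_complete_has_arrow_from_class[OF S_arrows minimal_generating_setD(3)[OF S] I]
    by blast
  with none have "s = (H, K)" by blast
  show thesis
  proof (rule that[OF I])
    show "fst s \<in> conj_class G I" using \<open>s = (H, K)\<close> HK(2) by simp
    show "s' = s" if "s' \<in> S" "fst s' \<in> conj_class G I" for s'
      using that none minimal_generating_setD(2)[OF S that(1)] by (cases s') auto
  qed
qed

lemma card_minimal_generating_set:
  assumes fin: "finite (carrier G)" and S: "minimal_generating_set G (complete_ts G) S"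
  shows "card S = card (conj_class G ` {H. meet_irreducible G H})"
proof -
  have S_arrows: "S \<subseteq> arrows G"
    using minimal_generating_setD(1)[OF S] by (simp add: complete_ts_def)
  have source_subset: "fst s \<subseteq> carrier G" if "s \<in> S" for s
  proof -
    obtain H K where s: "s = (H, K)" by (cases s)
    with that S_arrows have "(H, K) \<in> arrows G" by blast
    then show ?thesis using s subgroup.subset[OF arrowsD(1)] by simp
  qed
  have "bij_betw (\<lambda>s. conj_class G (fst s)) S (conj_class G ` {H. meet_irreducible G H})"
    unfolding bij_betw_def
  proof (intro conjI inj_onI equalityI subsetI)
    fix s s' assume s: "s \<in> S" and s': "s' \<in> S"
      and eq: "conj_class G (fst s) = conj_class G (fst s')"
    obtain I where I: "meet_irreducible G I" "fst s \<in> conj_class G I"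
      and unique: "\<And>s'. s' \<in> S \<Longrightarrow> fst s' \<in> conj_class G I \<Longrightarrow> s' = s"
      using minimal_generating_set_arrow_class[OF fin S s] by blast
    have "conj_class G (fst s') = conj_class G I"
      using eq conj_class_eq[OF I(2) meet_irreducible_subset_carrier[OF I(1)]] by simp
    then have "fst s' \<in> conj_class G I" using conj_class_refl[OF source_subset[OF s']] by simp
    then show "s = s'" using unique[OF s'] by simp
  next
    fix c assume "c \<in> (\<lambda>s. conj_class G (fst s)) ` S"
    then obtain s where s: "s \<in> S" "c = conj_class G (fst s)" by blast
    obtain I where I: "meet_irreducible G I" "fst s \<in> conj_class G I"
      using minimal_generating_set_arrow_class[OF fin S s(1)] by blast
    have "c = conj_class G I"
      using s(2) conj_class_eq[OF I(2) meet_irreducible_subset_carrier[OF I(1)]] by simp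
    then show "c \<in> conj_class G ` {H. meet_irreducible G H}" using I(1) by blast
  next
    fix c assume "c \<in> conj_class G ` {H. meet_irreducible G H}"
    then obtain I where I: "meet_irreducible G I" "c = conj_class G I" by blast
    obtain H K where HK: "(H, K) \<in> S" "H \<in> conj_class G I"
      using generated_ts_complete_has_arrow_from_class[OF S_arrows minimal_generating_setD(3)[OF S] I(1)]
      by blast
    have "c = conj_class G (fst (H, K))"
      using I(2) conj_class_eq[OF HK(2) meet_irreducible_subset_carrier[OF I(1)]] by simp
    then show "c \<in> (\<lambda>s. conj_class G (fst s)) ` S" using HK(1) by (rule image_eqI)
  qed
  then show ?thesis by (rule bij_betw_same_card)
qed

lemma conj_class_transversal_exists:
  assumes subset: "\<And>I. P I \<Longrightarrow> I \<subseteq> carrier G"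
    and closed: "\<And>I J. J \<in> conj_class G I \<Longrightarrow> P I \<Longrightarrow> P J"
  obtains R where "R \<subseteq> {H. P H}" "\<forall>H. P H \<longrightarrow> (\<exists>!I. I \<in> R \<and> I \<in> conj_class G H)"
proof -
  define rep where "rep H = (SOME I. I \<in> conj_class G H)" for H
  have rep_in: "rep H \<in> conj_class G H" if "P H" for H
    unfolding rep_def using conj_class_refl[OF subset[OF that]] by (rule someI)
  show thesis
  proof (rule that)
    show "rep ` {H. P H} \<subseteq> {H. P H}"
      using closed rep_in by blast
    show "\<forall>H. P H \<longrightarrow> (\<exists>!I. I \<in> rep ` {H. P H} \<and> I \<in> conj_class G H)"
    proof (intro allI impI ex1I)
      fix H assume H: "P H"
      show "rep H \<in> rep ` {H. P H} \<and> rep H \<in> conj_class G H"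
        using H rep_in by blast
      fix I assume "I \<in> rep ` {H. P H} \<and> I \<in> conj_class G H"
      then obtain H' where H': "P H'" "I = rep H'" "I \<in> conj_class G H" by blast
      have "conj_class G H' = conj_class G I"
        using conj_class_eq[OF rep_in[OF H'(1)] subset[OF H'(1)]] H'(2) by simp
      also have "\<dots> = conj_class G H" by (rule conj_class_eq[OF H'(3) subset[OF H]])
      finally show "I = rep H" using H'(2) by (simp add: rep_def)
    qed
  qed
qed

end

theorem proposition4p5:
  fixes G :: "('a, 'b) monoid_scheme"
  assumes "group G" and "finite (carrier G)"
  shows "width G = card (conj_class G ` {H. meet_irreducible G H})
    \<and> (\<forall>R. R \<subseteq> {H. meet_irreducible G H}
          \<and> (\<forall>H. meet_irreducible G H \<longrightarrow> (\<exists>!I. I \<in> R \<and> I \<in> conj_class G H))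
          \<longrightarrow> minimal_generating_set G (complete_ts G) ((\<lambda>I. (I, carrier G)) ` R))"
proof -
  interpret group G by (rule assms(1))
  have representatives: "\<forall>R. R \<subseteq> {H. meet_irreducible G H}
          \<and> (\<forall>H. meet_irreducible G H \<longrightarrow> (\<exists>!I. I \<in> R \<and> I \<in> conj_class G H))
          \<longrightarrow> minimal_generating_set G (complete_ts G) ((\<lambda>I. (I, carrier G)) ` R)"
    using minimal_generating_set_representatives[OF assms(2)] by blast
  obtain R where "R \<subseteq> {H. meet_irreducible G H}"
    "\<forall>H. meet_irreducible G H \<longrightarrow> (\<exists>!I. I \<in> R \<and> I \<in> conj_class G H)"
    using conj_class_transversal_exists[OF meet_irreducible_subset_carrier meet_irreducible_conj_class] .
  then have "minimal_generating_set G (complete_ts G) ((\<lambda>I. (I, carrier G)) ` R)"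
    by (rule minimal_generating_set_representatives[OF assms(2)])
  then have "minimal_generating_set G (complete_ts G) (SOME S. minimal_generating_set G (complete_ts G) S)"
    by (rule someI)
  then have "width G = card (conj_class G ` {H. meet_irreducible G H})"
    unfolding width_def mgen_card_def by (rule card_minimal_generating_set[OF assms(2)])
  with representatives show ?thesis by blast
qed

end
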